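(* Let $G=A(n,\theta)$ with $n\ge3$ odd. No element of order $4$ in $G$ is conjugate to its inverse, and $G$ has exactly $2(2^n-1)$ conjugacy classes of elements of order $4$.
   Context: Let $n=2m+1$ be odd, $\mathbb{F}_{2^n}$ the field with $2^n$ elements, $\theta$ a generator of $\mathrm{Gal}(\mathbb{F}_{2^n}/\mathbb{F}_2)$, $a^\theta$ the image of $a$ under $\theta$. $G=A(n,\theta)$ is the group of matrices $\begin{bmatrix}1&a&b\\0&1&a^\theta\\0&0&1\end{bmatrix}$, $a,b\in\mathbb{F}_{2^n}$, denoted $(a,b)$, with $(a,b)(c,d)=(a+c,\,b+d+ac^\theta)$. *)

theory Defs
  imports "HOL-Algebra.Multiplicative_Group"
begin

definition field_aut :: "('a::field \<Rightarrow> 'a) \<Rightarrow> bool" where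
  "field_aut s \<longleftrightarrow> bij s \<and> (\<forall>x y. s (x + y) = s x + s y) \<and> (\<forall>x y. s (x * y) = s x * s y)"

definition galois_generator :: "('a::field \<Rightarrow> 'a) \<Rightarrow> bool" where
  "galois_generator s \<longleftrightarrow> field_aut s \<and> (\<forall>t. field_aut t \<longrightarrow> (\<exists>k::nat. t = (s ^^ k)))"

text \<open>The group A(n,theta): pairs (a,b) standing for the matrix [[1,a,b],[0,1,theta a],[0,0,1]],
  with (a,b)(c,d) = (a+c, b+d+a*theta c).\<close>

definition A_grp :: "('a::field \<Rightarrow> 'a) \<Rightarrow> ('a \<times> 'a) monoid" where
  "A_grp s = \<lparr>carrier = UNIV,
              mult = (\<lambda>(a, b) (c, d). (a + c, b + d + a * s c)),
              one = (0, 0)\<rparr>"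

definition conj_class :: "('g, 'b) monoid_scheme \<Rightarrow> 'g \<Rightarrow> 'g set" where
  "conj_class G x = {g \<otimes>\<^bsub>G\<^esub> x \<otimes>\<^bsub>G\<^esub> inv\<^bsub>G\<^esub> g | g. g \<in> carrier G}"

end

(*
  Conjugating (a, b) by (c, d) gives (a, b + c \<theta>(a) - a \<theta>(c)), so the conjugacy classes with
  first coordinate a are the cosets of the additive subgroup H_a = {c \<theta>(a) - a \<theta>(c)}.
  In characteristic 2 the elements of order 4 are those with a \<noteq> 0, and the inverse of (a, b)
  is (a, b + a \<theta>(a)). The kernel of c \<mapsto> c \<theta>(a) - a \<theta>(c) is {0, a}, since the fixed field of
  a generator \<theta> is F_2; hence H_a has index 2. Finally a \<theta>(a) \<notin> H_a, for otherwise t = c / a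
  solves \<theta>(t) = t + 1. Writing the Frobenius as \<theta>^k, an even k forces t \<in> F_2, while an odd k
  gives t = t^(2^n) = \<theta>^(kn)(t) = t + 1 because n is odd. So no element of order 4 is
  conjugate to its inverse, and each of the 2^n - 1 values a \<noteq> 0 carries exactly two classes.
*)
theory Submission
  imports Defs "HOL-Number_Theory.Residues"
begin

lemma finite_field_power_card:
  fixes x :: "'a::{field, finite}"
  shows "x ^ card (UNIV :: 'a set) = x"
proof (cases "x = 0")
  case False
  define M where "M = \<lparr>carrier = - {0 :: 'a}, monoid.mult = (*), one = 1 :: 'a\<rparr>"
  interpret M: group M
  proof (rule groupI)
    fix y assume "y \<in> carrier M"
    then show "\<exists>z\<in>carrier M. z \<otimes>\<^bsub>M\<^esub> y = \<one>\<^bsub>M\<^esub>"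
      by (intro bexI[of _ "inverse y"]) (simp_all add: M_def)
  qed (simp_all add: M_def mult.assoc)
  have pow_M: "y [^]\<^bsub>M\<^esub> k = y ^ k" for y :: 'a and k :: nat
    by (induction k) (simp_all add: M_def mult.commute)
  have "x ^ order M = 1"
    using M.pow_order_eq_1[of x] False by (simp add: flip: pow_M) (simp add: M_def)
  moreover have "order M = card (UNIV :: 'a set) - 1"
    by (simp add: order_def M_def Compl_eq_Diff_UNIV card_Diff_singleton)
  ultimately show ?thesis
    using finite_UNIV_card_ge_0[where ?'a = 'a] by (simp add: power_eq_if)
qed (simp add: finite_UNIV_card_ge_0)

lemma finite_field_two_eq_zero:
  assumes "card (UNIV :: 'a::{field, finite} set) = 2 ^ n"
  shows "(2 :: 'a) = 0"
proof -
  have "prime CHAR('a)"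
    by (simp add: finite_imp_CHAR_pos prime_CHAR_semidom)
  moreover have "CHAR('a) dvd 2 ^ n"
    using CHAR_dvd_CARD[where ?'a = 'a] assms by simp
  ultimately have "CHAR('a) = 2"
    by (metis prime_dvd_power_nat prime_nat_iff two_is_prime_nat less_numeral_extra(4))
  then show ?thesis
    using of_nat_CHAR[where ?'a = 'a] by simp
qed

lemma card_range_mult_card_kernel:
  fixes f :: "'a::{ab_group_add, finite} \<Rightarrow> 'b::ab_group_add"
  assumes "additive f"
  shows "card (range f) * card {x. f x = 0} = card (UNIV :: 'a set)"
proof -
  have fibre: "{x. f x = f c} = (+) c ` {x. f x = 0}" for c
  proof
    show "(+) c ` {x. f x = 0} \<subseteq> {x. f x = f c}"
      by (auto simp: additive.add[OF assms])
    show "{x. f x = f c} \<subseteq> (+) c ` {x. f x = 0}"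
    proof
      fix x
      assume "x \<in> {x. f x = f c}"
      then have "x - c \<in> {x. f x = 0}"
        by (simp add: additive.diff[OF assms])
      then show "x \<in> (+) c ` {x. f x = 0}"
        by (rule image_eqI[rotated]) simp
    qed
  qed
  have "card (UNIV :: 'a set) = (\<Sum>y\<in>range f. card {x. f x = y})"
    using sum.image_gen[of "UNIV :: 'a set" "\<lambda>_. 1::nat" f] by simp
  also have "\<dots> = (\<Sum>y\<in>range f. card {x. f x = 0})"
    by (rule sum.cong) (auto simp: fibre card_image)
  finally show ?thesis
    by simp
qed

lemma index_two_subgroup_cases:
  fixes H :: "'a::{ab_group_add, finite} set"
  assumes diff_closed: "\<And>x y. x \<in> H \<Longrightarrow> y \<in> H \<Longrightarrow> x - y \<in> H"
    and index_two: "2 * card H = card (UNIV :: 'a set)"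
    and "w \<notin> H"
  shows "b \<in> H \<or> b - w \<in> H"
proof -
  have "(\<lambda>h. h + w) ` H \<subseteq> - H"
    using diff_closed[of "_ + w"] \<open>w \<notin> H\<close> by fastforce
  moreover have "card ((\<lambda>h. h + w) ` H) = card (- H)"
    using index_two by (simp add: card_image Compl_eq_Diff_UNIV card_Diff_subset)
  ultimately have translate: "(\<lambda>h. h + w) ` H = - H"
    by (simp add: card_subset_eq)
  show ?thesis
  proof (cases "b \<in> H")
    case False
    then obtain h where "h \<in> H" "b = h + w"
      using translate by (metis ComplI imageE)
    then show ?thesis
      by simp
  qed simp
qed

locale field_automorphism =
  fixes s :: "'a::field \<Rightarrow> 'a"
  assumes field_aut: "field_aut s"
begin

sublocale additive s
  using field_aut by unfold_locales (simp add: field_aut_def)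

lemma mult: "s (x * y) = s x * s y"
  using field_aut by (simp add: field_aut_def)

lemma eq_iff: "s x = s y \<longleftrightarrow> x = y"
  using field_aut by (auto simp: field_aut_def bij_def dest: injD)

lemma eq_0_iff [simp]: "s x = 0 \<longleftrightarrow> x = 0"
  using eq_iff[of x 0] by (simp add: zero)

lemma one [simp]: "s 1 = 1"
  using mult[of 1 1] by (metis eq_0_iff mult_cancel_left2 one_neq_zero)

lemma divide: "s (x / y) = s x / s y"
proof (cases "y = 0")
  case False
  then have "s (x / y) * s y = s x"
    by (simp flip: mult)
  then show ?thesis
    using False by (simp add: eq_divide_eq)
qed (simp add: zero)

lemma funpow_fixed: "s u = u \<Longrightarrow> (s ^^ k) u = u"
  by (induction k) simp_all

end

lemma field_aut_square:
  assumes "(2 :: 'a::{field, finite}) = 0"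
  shows "field_aut (\<lambda>x::'a. x ^ 2)"
proof -
  have square_add: "(x + y) ^ 2 = x ^ 2 + y ^ 2" for x y :: 'a
    by (simp add: power2_sum assms)
  have "(x - y) ^ 2 = x ^ 2 - y ^ 2" for x y :: 'a
    using square_add[of "x - y" y] by simp
  then have "inj (\<lambda>x::'a. x ^ 2)"
    by (intro injI) (metis eq_iff_diff_eq_0 power_eq_0_iff)
  then show ?thesis
    by (simp add: field_aut_def finite_UNIV_inj_surj bij_def square_add power_mult_distrib)
qed

lemma (in group) ord_eq_4_iff:
  assumes "x \<in> carrier G" and "x [^] (4::nat) = \<one>"
  shows "ord x = 4 \<longleftrightarrow> x [^] (2::nat) \<noteq> \<one>"
proof -
  have "ord x dvd 4"
    using assms pow_eq_id by blast
  then have "ord x \<le> 4"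
    by (simp add: dvd_imp_le)
  then have "ord x = 0 \<or> ord x = 1 \<or> ord x = 2 \<or> ord x = 3 \<or> ord x = 4"
    by presburger
  with \<open>ord x dvd 4\<close> have "ord x = 1 \<or> ord x = 2 \<or> ord x = 4"
    by auto
  then show ?thesis
    using pow_eq_id[OF assms(1), of 2] by auto
qed

lemma (in group) self_in_conj_class: "x \<in> carrier G \<Longrightarrow> x \<in> conj_class G x"
  unfolding conj_class_def by (metis (mono_tags, lifting) CollectI inv_one one_closed r_one l_one)

lemma A_grp_mult [simp]: "(a, b) \<otimes>\<^bsub>A_grp s\<^esub> (c, d) = (a + c, b + d + a * s c)"
  by (simp add: A_grp_def)

lemma A_grp_one [simp]: "\<one>\<^bsub>A_grp s\<^esub> = (0, 0)"
  by (simp add: A_grp_def)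

lemma A_grp_carrier [simp]: "carrier (A_grp s) = UNIV"
  by (simp add: A_grp_def)

lemma group_A_grp:
  assumes "additive s"
  shows "group (A_grp s)"
proof (rule groupI)
  fix x y z :: "'a \<times> 'a"
  show "x \<otimes>\<^bsub>A_grp s\<^esub> y \<otimes>\<^bsub>A_grp s\<^esub> z = x \<otimes>\<^bsub>A_grp s\<^esub> (y \<otimes>\<^bsub>A_grp s\<^esub> z)"
    by (cases x; cases y; cases z) (simp add: additive.add[OF assms] algebra_simps)
  obtain a b where "x = (a, b)"
    by fastforce
  then show "\<exists>y\<in>carrier (A_grp s). y \<otimes>\<^bsub>A_grp s\<^esub> x = \<one>\<^bsub>A_grp s\<^esub>"
    by (intro bexI[of _ "(- a, a * s a - b)"]) (simp_all add: additive.minus[OF assms])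
qed auto

lemma A_grp_inv:
  assumes "additive s"
  shows "inv\<^bsub>A_grp s\<^esub> (a, b) = (- a, a * s a - b)"
  by (rule group.inv_equality[OF group_A_grp[OF assms]]) (simp_all add: additive.minus[OF assms])

definition conj_offset :: "('a::field \<Rightarrow> 'a) \<Rightarrow> 'a \<Rightarrow> 'a \<Rightarrow> 'a" where
  "conj_offset s a c = c * s a - a * s c"

lemma additive_conj_offset: "additive s \<Longrightarrow> additive (conj_offset s a)"
  by unfold_locales (simp add: conj_offset_def additive.add algebra_simps)

lemma conj_class_A_grp:
  assumes "additive s"
  shows "conj_class (A_grp s) (a, b) = {(a, b + conj_offset s a c) | c. True}"
proof -
  have "(c, d) \<otimes>\<^bsub>A_grp s\<^esub> (a, b) \<otimes>\<^bsub>A_grp s\<^esub> inv\<^bsub>A_grp s\<^esub> (c, d) = (a, b + conj_offset s a c)"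
    for c d
    by (simp add: A_grp_inv[OF assms] additive.minus[OF assms] conj_offset_def algebra_simps)
  then show ?thesis
    by (auto simp: conj_class_def)
qed

lemma conj_class_A_grp_eq_iff:
  assumes "additive s"
  shows "conj_class (A_grp s) (a, b) = conj_class (A_grp s) (a', b')
    \<longleftrightarrow> a' = a \<and> b' - b \<in> range (conj_offset s a)"
proof
  assume eq: "conj_class (A_grp s) (a, b) = conj_class (A_grp s) (a', b')"
  have "(a', b') \<in> conj_class (A_grp s) (a, b)"
    using group.self_in_conj_class[OF group_A_grp[OF assms]] by (simp add: eq)
  then show "a' = a \<and> b' - b \<in> range (conj_offset s a)"
    by (auto simp: conj_class_A_grp[OF assms])
next
  assume "a' = a \<and> b' - b \<in> range (conj_offset s a)"
  then obtain e where "a' = a" and b': "b' = b + conj_offset s a e"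
    by (metis add.commute diff_add_cancel rangeE)
  interpret additive "conj_offset s a"
    using assms by (rule additive_conj_offset)
  have "b' + conj_offset s a c = b + conj_offset s a (e + c)"
    and "b + conj_offset s a c = b' + conj_offset s a (c - e)" for c
    by (simp_all add: b' add diff)
  then show "conj_class (A_grp s) (a, b) = conj_class (A_grp s) (a', b')"
    unfolding conj_class_A_grp[OF assms] \<open>a' = a\<close> by blast
qed

context field_automorphism
begin

lemma conj_offset_eq_0_iff:
  assumes "a \<noteq> 0"
  shows "conj_offset s a c = 0 \<longleftrightarrow> s (c / a) = c / a"
  using assms by (auto simp: conj_offset_def divide frac_eq_eq algebra_simps)

lemma conj_offset_eq_mult_aut_imp:
  assumes "a \<noteq> 0" and "conj_offset s a c = a * s a"
  shows "s (c / a) = c / a - 1"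
proof -
  define t where "t = c / a"
  have "c = t * a"
    using assms(1) by (simp add: t_def)
  then have "a * s a * (t - s t) = a * s a * 1"
    using assms(2) by (simp add: conj_offset_def mult algebra_simps)
  then show ?thesis
    using assms(1) by (simp add: t_def eq_diff_eq diff_eq_eq add.commute)
qed

end

locale char2_automorphism = field_automorphism s for s :: "'a::field \<Rightarrow> 'a" +
  assumes two_eq_zero: "(2 :: 'a) = 0"
begin

lemma add_self [simp]: "(x::'a) + x = 0"
  by (metis mult_2 mult_zero_left two_eq_zero)

lemma minus_eq [simp]: "- (x::'a) = x"
  by (rule minus_unique) simp

lemma diff_eq_add [simp]: "(x::'a) - y = x + y"
  by simp

lemma A_grp_square: "(a, b) [^]\<^bsub>A_grp s\<^esub> (2::nat) = (0, a * s a)"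
  by (simp add: numeral_2_eq_2)

lemma ord_A_grp_eq_4_iff: "group.ord (A_grp s) (a, b) = 4 \<longleftrightarrow> a \<noteq> 0"
proof -
  interpret group "A_grp s"
    by (rule group_A_grp) unfold_locales
  have "(a, b) [^]\<^bsub>A_grp s\<^esub> (4::nat) = \<one>\<^bsub>A_grp s\<^esub>"
    using nat_pow_pow[of "(a, b)" 2 2] by (simp add: A_grp_square)
  then show ?thesis
    by (simp add: ord_eq_4_iff A_grp_square)
qed

lemma inv_in_conj_class_iff:
  "inv\<^bsub>A_grp s\<^esub> (a, b) \<in> conj_class (A_grp s) (a, b) \<longleftrightarrow> a * s a \<in> range (conj_offset s a)"
  by (auto simp: A_grp_inv conj_class_A_grp additive_axioms add.commute)

end

locale galois_F2n =
  fixes s :: "'a::{field, finite} \<Rightarrow> 'a" and n :: nat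
  assumes card_UNIV: "card (UNIV :: 'a set) = 2 ^ n"
    and odd_n: "odd n"
    and generator: "galois_generator s"

sublocale galois_F2n \<subseteq> char2_automorphism
  using generator finite_field_two_eq_zero[OF card_UNIV]
  by unfold_locales (simp_all add: galois_generator_def)

context galois_F2n
begin

lemma frobenius_eq_funpow: obtains k where "(\<lambda>x::'a. x ^ 2) = s ^^ k"
  using generator field_aut_square[OF two_eq_zero] by (auto simp: galois_generator_def)

lemma fixed_point_cases:
  assumes "s u = u"
  shows "u = 0 \<or> u = 1"
proof -
  obtain k where "(\<lambda>x::'a. x ^ 2) = s ^^ k"
    by (rule frobenius_eq_funpow)
  then have "u ^ 2 = u"
    using funpow_fixed[OF assms, of k] by metis
  then show ?thesis
    by (simp add: power2_eq_square)
qed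

lemma no_shift_by_one: "s t \<noteq> t + 1"
proof
  assume shift: "s t = t + 1"
  obtain k where frob: "(\<lambda>x::'a. x ^ 2) = s ^^ k"
    by (rule frobenius_eq_funpow)
  have funpow_shift: "(s ^^ m) t = (if even m then t else t + 1)" for m
    by (induction m) (simp_all add: shift add add.assoc)
  show False
  proof (cases "even k")
    case True
    then have "t ^ 2 = t"
      using funpow_shift[of k] by (metis frob)
    then have "s t = t"
      using one zero by (auto simp: power2_eq_square)
    then show False
      using shift by simp
  next
    case False
    have frob_power: "((\<lambda>x::'a. x ^ 2) ^^ m) t = t ^ (2 ^ m)" for m
      by (induction m) (simp_all add: power_mult[symmetric] mult.commute)
    have "t = ((\<lambda>x::'a. x ^ 2) ^^ n) t"
      using frob_power[of n] finite_field_power_card[of t] card_UNIV by simp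
    also have "\<dots> = (s ^^ (k * n)) t"
      by (simp add: frob funpow_mult)
    also have "\<dots> = t + 1"
      using funpow_shift[of "k * n"] False odd_n by simp
    finally show False
      by simp
  qed
qed

lemma mult_aut_notin_range_conj_offset:
  assumes "a \<noteq> 0"
  shows "a * s a \<notin> range (conj_offset s a)"
  using conj_offset_eq_mult_aut_imp[OF assms] no_shift_by_one by (metis diff_eq_add rangeE)

lemma inv_notin_conj_class:
  assumes "a \<noteq> 0"
  shows "inv\<^bsub>A_grp s\<^esub> (a, b) \<notin> conj_class (A_grp s) (a, b)"
  using mult_aut_notin_range_conj_offset[OF assms] by (simp add: inv_in_conj_class_iff)

lemma conj_offset_kernel:
  assumes "a \<noteq> 0"
  shows "{c. conj_offset s a c = 0} = {0, a}"
proof -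
  have "conj_offset s a c = 0 \<longleftrightarrow> c / a = 0 \<or> c / a = 1" for c
    using fixed_point_cases conj_offset_eq_0_iff[OF assms] by (metis one zero)
  then show ?thesis
    using assms by auto
qed

lemma card_range_conj_offset:
  assumes "a \<noteq> 0"
  shows "2 * card (range (conj_offset s a)) = card (UNIV :: 'a set)"
  using card_range_mult_card_kernel[OF additive_conj_offset[OF additive_axioms], of a]
  by (simp add: conj_offset_kernel[OF assms] assms mult.commute)

lemma conj_class_A_grp_cases:
  assumes "a \<noteq> 0"
  shows "conj_class (A_grp s) (a, b) = conj_class (A_grp s) (a, 0)
    \<or> conj_class (A_grp s) (a, b) = conj_class (A_grp s) (a, a * s a)"
proof -
  have range_diff: "x - y \<in> range (conj_offset s a)"
    if "x \<in> range (conj_offset s a)" and "y \<in> range (conj_offset s a)" for x y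
  proof -
    from that obtain c d where "x = conj_offset s a c" and "y = conj_offset s a d"
      by blast
    then have "x - y = conj_offset s a (c + d)"
      by (simp add: additive.add[OF additive_conj_offset[OF additive_axioms]])
    then show ?thesis
      by simp
  qed
  have "b \<in> range (conj_offset s a) \<or> b - a * s a \<in> range (conj_offset s a)"
    by (rule index_two_subgroup_cases[OF range_diff card_range_conj_offset[OF assms]
          mult_aut_notin_range_conj_offset[OF assms]])
  then show ?thesis
    by (simp add: conj_class_A_grp_eq_iff additive_axioms add.commute)
qed

lemma card_conj_classes_ord_4:
  "card {conj_class (A_grp s) x | x. x \<in> carrier (A_grp s) \<and> group.ord (A_grp s) x = 4}
    = 2 * (2 ^ n - 1)"
proof -
  define rep where "rep = (\<lambda>(a, i). conj_class (A_grp s) (a, if i then a * s a else 0))"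
  define R :: "('a \<times> bool) set" where "R = (UNIV - {0}) \<times> UNIV"
  have "{conj_class (A_grp s) x | x. x \<in> carrier (A_grp s) \<and> group.ord (A_grp s) x = 4}
      = rep ` R"
  proof
    show "rep ` R \<subseteq> {conj_class (A_grp s) x | x. x \<in> carrier (A_grp s) \<and> group.ord (A_grp s) x = 4}"
      by (fastforce simp: rep_def R_def ord_A_grp_eq_4_iff)
  next
    show "{conj_class (A_grp s) x | x. x \<in> carrier (A_grp s) \<and> group.ord (A_grp s) x = 4} \<subseteq> rep ` R"
    proof clarify
      fix a b
      assume "group.ord (A_grp s) (a, b) = 4"
      then have "a \<noteq> 0"
        by (simp add: ord_A_grp_eq_4_iff)
      then have "conj_class (A_grp s) (a, b) \<in> {rep (a, False), rep (a, True)}"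
        using conj_class_A_grp_cases[of a b] by (simp add: rep_def)
      then show "conj_class (A_grp s) (a, b) \<in> rep ` R"
        using \<open>a \<noteq> 0\<close> by (auto simp: R_def)
    qed
  qed
  moreover have "inj_on rep R"
    using mult_aut_notin_range_conj_offset
    by (auto simp: inj_on_def rep_def R_def conj_class_A_grp_eq_iff additive_axioms split: if_splits)
  moreover have "card R = (2 ^ n - 1) * 2"
    using card_UNIV by (simp add: R_def card_cartesian_product card_Diff_singleton)
  ultimately show ?thesis
    by (simp add: card_image)
qed

end

theorem lemma3p1:
  fixes s :: "'a::{field, finite} \<Rightarrow> 'a" and n :: nat
  assumes "card (UNIV :: 'a set) = 2 ^ n" and "odd n" and "n \<ge> 3"
    and "galois_generator s"
  shows "(\<forall>x \<in> carrier (A_grp s). group.ord (A_grp s) x = 4 \<longrightarrow>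
            inv\<^bsub>A_grp s\<^esub> x \<notin> conj_class (A_grp s) x)
       \<and> card {conj_class (A_grp s) x | x. x \<in> carrier (A_grp s) \<and> group.ord (A_grp s) x = 4}
           = 2 * (2 ^ n - 1)"
proof -
  interpret galois_F2n s n
    using assms(1,2,4) by unfold_locales
  show ?thesis
    using inv_notin_conj_class card_conj_classes_ord_4 by (auto simp: ord_A_grp_eq_4_iff)
qed

end
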